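(* Let $(G,\sigma)$ be a connection graph and $i\neq j$ vertices, and write the conductance matrix as $\mathcal{C}^\sigma(i,j)=\begin{bmatrix}\mathcal{C}^\sigma_{ii}&\mathcal{C}^\sigma_{ij}\\ \mathcal{C}^\sigma_{ji}&\mathcal{C}^\sigma_{jj}\end{bmatrix}$. Then $$\mathcal{C}^\sigma_{ii}=\deg(i)\big(I_{d\times d}-(1-\mathbb{P}^i[T^1_j<T^1_i])\,\Omega^1_{ii}(j)\big),\qquad \mathcal{C}^\sigma_{ji}=-\deg(j)\,\mathbb{P}^j[T^1_i<T^1_j]\,\Omega^1_{ji}(j),$$ and, using $c_{ij}=\deg(i)\mathbb{P}^i[T^1_j<T^1_i]=\deg(j)\mathbb{P}^j[T^1_i<T^1_j]$, $$\mathcal{C}^\sigma(i,j)=c_{ij}\begin{bmatrix}I&-I\\-I&I\end{bmatrix}+\begin{bmatrix}(\deg(i)-c_{ij})(I-\Omega^1_{ii}(j))& c_{ij}(I-\Omega^1_{ij}(i))\\ c_{ij}(I-\Omega^1_{ji}(j))&(\deg(j)-c_{ij})(I-\Omega^1_{jj}(i))\end{bmatrix},$$ where $I=I_{d\times d}$.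
   Context: A connection graph $(G,\sigma)$: finite connected weighted graph $G=(V,E,W)$, $V=\{1,\dots,n\}$, $w_{xy}>0$ iff $\{x,y\}\in E$, $\deg(x)=\sum_y w_{xy}$, and $\sigma$ mapping oriented edges to $\mathsf{O}(d)$ with $\sigma_{yx}=\sigma_{xy}^{\mathrm T}$. Connection Laplacian $\mathcal{L}$: $nd\times nd$ block matrix with blocks $\deg(x)I_d$ on the diagonal, $-w_{xy}\sigma_{xy}$ for $x\sim y$, $0$ otherwise. For a block matrix $M=\begin{bmatrix}A&B\\C&D\end{bmatrix}$, $M/D=A-BD^\dagger C$ ($\dagger$ = Moore–Penrose inverse). The conductance matrix $\mathcal{C}^\sigma(i,j)\in\mathbb{R}^{2d\times2d}$ is the Schur complement $\mathcal{L}/\mathcal{L}_{\{i,j\}^c,\{i,j\}^c}$, with blocks ordered $i$ then $j$. Classical effective resistance $r_{ij}=(e_i-e_j)^{\mathrm T}L^\dagger(e_i-e_j)$ where $L=D-W$ is the graph Laplacian, and $c_{ij}=1/r_{ij}$. $(X_t)$: simple random walk with transition probabilities $w_{xy}/\deg(x)$; $\mathbb{P}^x$ given $X_0=x$; $T^1_k=\inf\{t\ge1:X_t=k\}$. For $a,b,k\in V$, $\Omega^1_{ab}(k)=\mathbb{E}^a\big[\prod_{\ell=1}^{T^1_b}\sigma_{X_{\ell-1}X_\ell}\mid T^1_b<T^1_k\big]$ (ordered product). *)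

theory Defs
  imports "HOL-Analysis.Analysis"
begin

definition mmul :: "'i set \<Rightarrow> ('i \<Rightarrow> 'i \<Rightarrow> real) \<Rightarrow> ('i \<Rightarrow> 'i \<Rightarrow> real) \<Rightarrow> 'i \<Rightarrow> 'i \<Rightarrow> real" where
  "mmul S A B x y = (\<Sum>z\<in>S. A x z * B z y)"

definition pinv :: "'i set \<Rightarrow> ('i \<Rightarrow> 'i \<Rightarrow> real) \<Rightarrow> 'i \<Rightarrow> 'i \<Rightarrow> real" where
  "pinv S A = (THE X. (\<forall>x y. (x \<notin> S \<or> y \<notin> S) \<longrightarrow> X x y = 0) \<and>
     (\<forall>x\<in>S. \<forall>y\<in>S. mmul S (mmul S A X) A x y = A x y) \<and>
     (\<forall>x\<in>S. \<forall>y\<in>S. mmul S (mmul S X A) X x y = X x y) \<and>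
     (\<forall>x\<in>S. \<forall>y\<in>S. mmul S A X x y = mmul S A X y x) \<and>
     (\<forall>x\<in>S. \<forall>y\<in>S. mmul S X A x y = mmul S X A y x))"

text \<open>Schur complement M / M_{S^c,S^c}, the result being read on S x S.\<close>
definition schur :: "'i set \<Rightarrow> ('i \<Rightarrow> 'i \<Rightarrow> real) \<Rightarrow> 'i \<Rightarrow> 'i \<Rightarrow> real" where
  "schur S M p q = M p q - (\<Sum>r\<in>-S. \<Sum>s\<in>-S. M p r * pinv (-S) M r s * M s q)"

definition deg :: "('n::finite \<Rightarrow> 'n \<Rightarrow> real) \<Rightarrow> 'n \<Rightarrow> real" where
  "deg w x = (\<Sum>y\<in>UNIV. w x y)"

definition weighted_graph :: "('n::finite \<Rightarrow> 'n \<Rightarrow> real) \<Rightarrow> bool" where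
  "weighted_graph w \<longleftrightarrow> (\<forall>x y. w x y \<ge> 0 \<and> w x y = w y x) \<and> (\<forall>x. w x x = 0)
     \<and> (\<forall>x y. (x, y) \<in> {(u, v). w u v > 0}\<^sup>*)"

definition connection :: "('n::finite \<Rightarrow> 'n \<Rightarrow> real) \<Rightarrow> ('n \<Rightarrow> 'n \<Rightarrow> real^'d^'d) \<Rightarrow> bool" where
  "connection w \<sigma> \<longleftrightarrow> (\<forall>x y. w x y > 0 \<longrightarrow>
      orthogonal_matrix (\<sigma> x y) \<and> \<sigma> y x = transpose (\<sigma> x y))"

definition conn_laplacian :: "('n::finite \<Rightarrow> 'n \<Rightarrow> real) \<Rightarrow> ('n \<Rightarrow> 'n \<Rightarrow> real^'d::finite^'d)
     \<Rightarrow> ('n \<times> 'd) \<Rightarrow> ('n \<times> 'd) \<Rightarrow> real" where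
  "conn_laplacian w \<sigma> p q = (let (x, a) = p; (y, b) = q in
     if x = y then (if a = b then deg w x else 0)
     else (if w x y > 0 then - w x y * (\<sigma> x y $ a $ b) else 0))"

definition conductance :: "('n::finite \<Rightarrow> 'n \<Rightarrow> real) \<Rightarrow> ('n \<Rightarrow> 'n \<Rightarrow> real^'d::finite^'d)
     \<Rightarrow> 'n \<Rightarrow> 'n \<Rightarrow> ('n \<times> 'd) \<Rightarrow> ('n \<times> 'd) \<Rightarrow> real" where
  "conductance w \<sigma> i j = schur ({i, j} \<times> UNIV) (conn_laplacian w \<sigma>)"

definition blk :: "(('n \<times> 'd) \<Rightarrow> ('n \<times> 'd) \<Rightarrow> real) \<Rightarrow> 'n \<Rightarrow> 'n \<Rightarrow> real^'d::finite^'d" where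
  "blk C x y = (\<chi> a b. C (x, a) (y, b))"

definition graph_laplacian :: "('n::finite \<Rightarrow> 'n \<Rightarrow> real) \<Rightarrow> 'n \<Rightarrow> 'n \<Rightarrow> real" where
  "graph_laplacian w x y = (if x = y then deg w x else 0) - w x y"

definition eff_resistance :: "('n::finite \<Rightarrow> 'n \<Rightarrow> real) \<Rightarrow> 'n \<Rightarrow> 'n \<Rightarrow> real" where
  "eff_resistance w i j = (let e = (\<lambda>x. (if x = i then 1 else 0) - (if x = j then 1 else (0::real)))
     in \<Sum>x\<in>UNIV. \<Sum>y\<in>UNIV. e x * pinv UNIV (graph_laplacian w) x y * e y)"

definition eff_conductance :: "('n::finite \<Rightarrow> 'n \<Rightarrow> real) \<Rightarrow> 'n \<Rightarrow> 'n \<Rightarrow> real" where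
  "eff_conductance w i j = 1 / eff_resistance w i j"

text \<open>A trajectory after time 0 is the list [X_1,...,X_m].
  hitpaths b k m: trajectories of length m >= 1 with X_m = b and X_l not in {b,k} for 1 <= l < m,
  i.e. exactly the event {T^1_b = m, T^1_b < T^1_k}.\<close>
definition tprob :: "('n::finite \<Rightarrow> 'n \<Rightarrow> real) \<Rightarrow> 'n \<Rightarrow> 'n \<Rightarrow> real" where
  "tprob w x y = w x y / deg w x"

definition pathprob :: "('n::finite \<Rightarrow> 'n \<Rightarrow> real) \<Rightarrow> 'n \<Rightarrow> 'n list \<Rightarrow> real" where
  "pathprob w a vs = prod_list (map (\<lambda>(x, y). tprob w x y) (zip (a # vs) vs))"

definition pathhol :: "('n \<Rightarrow> 'n \<Rightarrow> real^'d::finite^'d) \<Rightarrow> 'n \<Rightarrow> 'n list \<Rightarrow> real^'d^'d" where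
  "pathhol \<sigma> a vs = foldl (**) (mat 1) (map (\<lambda>(x, y). \<sigma> x y) (zip (a # vs) vs))"

definition hitpaths :: "'n \<Rightarrow> 'n \<Rightarrow> nat \<Rightarrow> 'n list set" where
  "hitpaths b k m = {vs. length vs = m \<and> vs \<noteq> [] \<and> last vs = b \<and>
       (\<forall>v\<in>set (butlast vs). v \<noteq> b \<and> v \<noteq> k)}"

definition hitprob :: "('n::finite \<Rightarrow> 'n \<Rightarrow> real) \<Rightarrow> 'n \<Rightarrow> 'n \<Rightarrow> 'n \<Rightarrow> real" where
  "hitprob w a b k = (\<Sum>m. \<Sum>vs\<in>hitpaths b k m. pathprob w a vs)"

text \<open>Omega^1_{ab}(k) = E^a[ordered product of sigma up to T^1_b | T^1_b < T^1_k]\<close>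
definition Omega1 :: "('n::finite \<Rightarrow> 'n \<Rightarrow> real) \<Rightarrow> ('n \<Rightarrow> 'n \<Rightarrow> real^'d::finite^'d)
     \<Rightarrow> 'n \<Rightarrow> 'n \<Rightarrow> 'n \<Rightarrow> real^'d^'d" where
  "Omega1 w \<sigma> a b k = (1 / hitprob w a b k) *\<^sub>R
     (\<Sum>m. \<Sum>vs\<in>hitpaths b k m. pathprob w a vs *\<^sub>R pathhol \<sigma> a vs)"

end

theory Submission
  imports Defs
begin

text \<open>
  Everything is read off from harmonic functions of the random walk.  By the maximum principle,
  in its vector-valued form for the orthogonal connection, the block of the connection Laplacian
  off the terminals i, j is invertible; so its pseudo-inverse is a true inverse, and a column
  of the Schur complement is the corresponding Laplacian column extended by the harmonic solution
  of the interior equations.  By the first-step equation that solution is the unnormalised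
  holonomy E^x[\<Pi> \<sigma>; T_i < T_j], which yields the blocks of column i; swapping i and j
  yields the others.  For the scalars, the voltage \<phi> with \<phi>(i) = 1, \<phi>(j) = 0 and
  \<phi>(x) = P^x[T_i < T_j] otherwise satisfies L \<phi> = c (e_i - e_j) with
  c = deg(i) P^i[T_j < T_i] = deg(j) P^j[T_i < T_j], whence (e_i - e_j)^T L^+ (e_i - e_j) = 1 / c.
\<close>

section \<open>Matrices and paths of the walk\<close>

lemma sum_UNIV_remove2:
  fixes f :: "'a::finite \<Rightarrow> 'b::comm_monoid_add"
  assumes "a \<noteq> b"
  shows "sum f UNIV = f a + f b + sum f (- {a, b})"
proof -
  have "UNIV = {a, b} \<union> - {a, b}" by blast
  then have "sum f UNIV = sum f {a, b} + sum f (- {a, b})"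
    by (metis finite sum.union_disjoint Compl_disjoint)
  then show ?thesis using assms by simp
qed

lemma foldl_matrix_mul_assoc:
  "foldl (**) (A ** B) Ms = A ** foldl (**) B (Ms :: (real^'d::finite^'d) list)"
  by (induction Ms arbitrary: B) (simp_all add: matrix_mul_assoc[symmetric])

lemma matrix_mul_sum_right:
  "(A::real^'m^'n) ** (\<Sum>x\<in>X. F x) = (\<Sum>x\<in>X. A ** (F x :: real^'p^'m))"
  by (induction X rule: infinite_finite_induct) (simp_all add: matrix_add_ldistrib)

lemma bounded_linear_scaleR_matrix_mul:
  "bounded_linear (\<lambda>B. t *\<^sub>R (A ** B) :: real^'m::finite^'n::finite)"
proof -
  have "linear (\<lambda>B. t *\<^sub>R (A ** B) :: real^'m^'n)"
    by (rule linearI) (simp_all add: matrix_add_ldistrib matrix_scalar_ac scalar_matrix_assoc scaleR_add_right mult.commute)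
  then show ?thesis by (simp add: linear_conv_bounded_linear)
qed

lemma norm_orthogonal_matrix_le:
  fixes Q :: "real^'d::finite^'d"
  assumes "orthogonal_matrix Q"
  shows "norm Q \<le> real CARD('d)"
proof -
  have "norm Q = L2_set (\<lambda>a. norm (Q $ a)) UNIV" by (simp add: norm_vec_def)
  also have "\<dots> \<le> (\<Sum>a\<in>UNIV. norm (Q $ a))" by (rule L2_set_le_sum) simp
  also have "\<dots> = real CARD('d)"
    using assms by (simp add: orthogonal_matrix_orthonormal_rows row_def vec_nth_inverse)
  finally show ?thesis .
qed

lemma norm_orthogonal_matrix_mult:
  "orthogonal_matrix (Q::real^'d::finite^'d) \<Longrightarrow> norm (Q *v x) = norm x"
  by (simp add: orthogonal_transformation_matrix orthogonal_transformation_norm)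

lemma pathprob_Nil [simp]: "pathprob w x [] = 1"
  by (simp add: pathprob_def)

lemma pathhol_Nil [simp]: "pathhol \<sigma> x [] = mat 1"
  by (simp add: pathhol_def)

lemma pathprob_Cons [simp]: "pathprob w x (y # vs) = tprob w x y * pathprob w y vs"
  by (simp add: pathprob_def)

lemma pathhol_Cons [simp]: "pathhol \<sigma> x (y # vs) = \<sigma> x y ** pathhol \<sigma> y vs"
proof -
  have "pathhol \<sigma> x (y # vs) = foldl (**) (\<sigma> x y ** mat 1) (map (\<lambda>(x, y). \<sigma> x y) (zip (y # vs) vs))"
    by (simp add: pathhol_def)
  then show ?thesis
    by (simp only: foldl_matrix_mul_assoc) (simp add: pathhol_def)
qed

lemma hitpaths_0 [simp]: "hitpaths b k 0 = {}"
  by (simp add: hitpaths_def)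

lemma hitpaths_Suc:
  "hitpaths b k (Suc m) =
     (if m = 0 then {[b]} else (\<lambda>(y, vs). y # vs) ` ((- {b, k}) \<times> hitpaths b k m))"
proof (cases m)
  case 0
  then show ?thesis by (auto simp: hitpaths_def length_Suc_conv)
next
  case (Suc m')
  then show ?thesis
    by (fastforce simp: hitpaths_def length_Suc_conv image_iff)
qed

lemma sum_hitpaths_Suc:
  fixes F :: "'n::finite list \<Rightarrow> 'a::comm_monoid_add"
  shows "sum F (hitpaths b k (Suc m)) =
    (if m = 0 then F [b] else 0) + (\<Sum>y\<in>- {b, k}. \<Sum>vs\<in>hitpaths b k m. F (y # vs))"
proof (cases "m = 0")
  case False
  have "inj_on (\<lambda>(y, vs). y # vs) ((- {b, k}) \<times> hitpaths b k m)"
    by (auto simp: inj_on_def)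
  then show ?thesis
    using False by (simp add: hitpaths_Suc sum.reindex sum.cartesian_product case_prod_unfold)
qed (simp add: hitpaths_Suc)

section \<open>Weighted graphs and the maximum principle\<close>

lemma graph_laplacian_apply:
  "(\<Sum>y\<in>UNIV. graph_laplacian w x y * f y) = deg w x * f x - (\<Sum>y\<in>UNIV. w x y * f y)"
proof -
  have "(\<Sum>y\<in>UNIV. graph_laplacian w x y * f y)
      = (\<Sum>y\<in>UNIV. (if x = y then deg w x * f y else 0) - w x y * f y)"
    by (rule sum.cong) (simp_all add: graph_laplacian_def left_diff_distrib)
  then show ?thesis by (simp add: sum_subtractf)
qed

lemma ex_maximizer: obtains a where "\<And>y. (f :: 'n::finite \<Rightarrow> real) y \<le> f a"
proof -
  have "Max (range f) \<in> range f" by (rule Max_in) simp_all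
  then obtain a where "f a = Max (range f)" by (metis rangeE)
  then have "\<And>y. f y \<le> f a" by simp
  then show ?thesis by (rule that)
qed

locale network =
  fixes w :: "'n::finite \<Rightarrow> 'n \<Rightarrow> real"
  assumes weighted_graph: "weighted_graph w"
begin

lemma weight_nonneg: "w x y \<ge> 0"
  using weighted_graph by (simp add: weighted_graph_def)

lemma weight_sym: "w x y = w y x"
  using weighted_graph by (simp add: weighted_graph_def)

lemma weight_diag [simp]: "w x x = 0"
  using weighted_graph by (simp add: weighted_graph_def)

lemma connected: "(x, y) \<in> {(u, v). w u v > 0}\<^sup>*"
  using weighted_graph by (simp add: weighted_graph_def)

lemma deg_nonneg: "deg w x \<ge> 0"
  by (simp add: deg_def sum_nonneg weight_nonneg)

lemma weight_le_deg: "w x y \<le> deg w x"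
  unfolding deg_def by (rule member_le_sum) (simp_all add: weight_nonneg)

text \<open>At an isolated vertex tprob is a division by zero, and both sides vanish.\<close>
lemma deg_mult_tprob: "deg w x * tprob w x y = w x y"
proof (cases "deg w x = 0")
  case True
  then show ?thesis using weight_le_deg[of x y] weight_nonneg[of x y] by simp
qed (simp add: tprob_def)

lemma sum_weight_mult: "(\<Sum>y\<in>UNIV. w x y * f y) = deg w x * (\<Sum>y\<in>UNIV. tprob w x y * f y)"
  by (simp add: sum_distrib_left mult.assoc[symmetric] deg_mult_tprob)

lemma tprob_nonneg: "tprob w x y \<ge> 0"
  by (simp add: tprob_def weight_nonneg deg_nonneg)

lemma sum_tprob_le_1: "(\<Sum>y\<in>UNIV. tprob w x y) \<le> 1"
proof -
  have "(\<Sum>y\<in>UNIV. tprob w x y) = deg w x / deg w x"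
    by (simp add: tprob_def deg_def sum_divide_distrib[symmetric])
  then show ?thesis by simp
qed

lemma max_principle:
  fixes f :: "'n \<Rightarrow> real"
  assumes max: "\<And>y. f y \<le> f a"
    and subharmonic: "\<And>r. r \<in> U \<Longrightarrow> f r = f a \<Longrightarrow> deg w r * f r \<le> (\<Sum>y\<in>UNIV. w r y * f y)"
  obtains "\<And>y. f y = f a" | y where "y \<notin> U" "f y = f a"
proof (cases "\<exists>y. y \<notin> U \<and> f y = f a")
  case False
  text \<open>A maximum attained in U is attained at every neighbour, hence along every path.\<close>
  have spread: "f z = f a" if "f r = f a" "w r z > 0" for r z
  proof -
    have "r \<in> U" using False that(1) by blast
    then have "(\<Sum>y\<in>UNIV. w r y * f a) \<le> (\<Sum>y\<in>UNIV. w r y * f y)"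
      using subharmonic[of r] that(1) by (simp add: deg_def sum_distrib_right)
    then have "(\<Sum>y\<in>UNIV. w r y * (f a - f y)) \<le> 0"
      by (simp add: right_diff_distrib sum_subtractf)
    moreover have nonneg: "\<And>y. 0 \<le> w r y * (f a - f y)"
      using max weight_nonneg by simp
    ultimately have "(\<Sum>y\<in>UNIV. w r y * (f a - f y)) = 0"
      by (simp add: antisym sum_nonneg)
    then have "w r z * (f a - f z) = 0"
      using nonneg by (simp add: sum_nonneg_eq_0_iff)
    then show ?thesis using that(2) by simp
  qed
  have "f y = f a" for y
    using connected[of a y]
  proof (induction rule: rtrancl_induct)
    case (step y z)
    then show ?case using spread[of y z] by simp
  qed simp
  then show ?thesis by (rule that(1))
qed (use that(2) in blast)

lemma subharmonic_nonpos:
  fixes f :: "'n \<Rightarrow> real"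
  assumes "U \<noteq> UNIV"
    and boundary: "\<And>r. r \<notin> U \<Longrightarrow> f r \<le> 0"
    and subharmonic: "\<And>r. r \<in> U \<Longrightarrow> deg w r * f r \<le> (\<Sum>y\<in>UNIV. w r y * f y)"
  shows "f x \<le> 0"
proof -
  obtain a where max: "\<And>y. f y \<le> f a" by (rule ex_maximizer[of f]) blast
  obtain u where "u \<notin> U" using assms(1) by blast
  have "f a \<le> 0"
  proof (rule max_principle[of f a U])
    show "\<And>r. r \<in> U \<Longrightarrow> f r = f a \<Longrightarrow> deg w r * f r \<le> (\<Sum>y\<in>UNIV. w r y * f y)"
      using subharmonic by blast
    assume "\<And>y. f y = f a"
    then show "f a \<le> 0" using boundary[OF \<open>u \<notin> U\<close>] by metis
  next
    fix y assume "y \<notin> U" "f y = f a"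
    then show "f a \<le> 0" using boundary by metis
  qed (rule max)
  then show ?thesis using max order_trans by blast
qed

lemma subharmonic_const:
  fixes f :: "'n \<Rightarrow> real"
  assumes "\<And>r. deg w r * f r \<le> (\<Sum>y\<in>UNIV. w r y * f y)"
  shows "f x = f y"
proof -
  obtain a where max: "\<And>y. f y \<le> f a" by (rule ex_maximizer[of f]) blast
  have "f z = f a" for z
    using max assms by (rule max_principle[where U = UNIV]) auto
  then show ?thesis by metis
qed

lemma harmonic_vanishing:
  fixes g :: "'n \<Rightarrow> real"
  assumes "U \<noteq> UNIV" and "\<And>r. r \<notin> U \<Longrightarrow> g r = 0"
    and harmonic: "\<And>r. r \<in> U \<Longrightarrow> deg w r * g r = (\<Sum>y\<in>UNIV. w r y * g y)"
  shows "g x = 0"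
proof -
  have "\<bar>g x\<bar> \<le> 0"
  proof (rule subharmonic_nonpos[OF assms(1)])
    fix r assume "r \<in> U"
    have "deg w r * \<bar>g r\<bar> = \<bar>deg w r * g r\<bar>"
      by (simp add: abs_mult deg_nonneg)
    also have "\<dots> = \<bar>\<Sum>y\<in>UNIV. w r y * g y\<bar>"
      using harmonic[OF \<open>r \<in> U\<close>] by simp
    also have "\<dots> \<le> (\<Sum>y\<in>UNIV. \<bar>w r y * g y\<bar>)"
      by (rule sum_abs)
    also have "\<dots> = (\<Sum>y\<in>UNIV. w r y * \<bar>g y\<bar>)"
      by (simp add: abs_mult weight_nonneg)
    finally show "deg w r * \<bar>g r\<bar> \<le> (\<Sum>y\<in>UNIV. w r y * \<bar>g y\<bar>)" .
  qed (use assms(2) in simp)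
  then show ?thesis by simp
qed

lemma sum_graph_laplacian_column: "(\<Sum>x\<in>UNIV. graph_laplacian w x y) = 0"
  by (simp add: graph_laplacian_def sum_subtractf deg_def weight_sym[of _ y])

lemma graph_laplacian_kernel:
  assumes "\<And>x. (\<Sum>y\<in>UNIV. graph_laplacian w x y * f y) = 0"
  shows "f x = f y"
  by (rule subharmonic_const) (use assms in \<open>simp add: graph_laplacian_apply\<close>)

end

section \<open>Hitting probabilities and holonomies\<close>

lemma sums_first_step:
  fixes a :: "'n \<Rightarrow> nat \<Rightarrow> 'a::real_normed_vector"
  assumes "\<And>y. summable (a y)" and "\<And>y. bounded_linear (L y)"
    and "a x 0 = 0"
    and "\<And>m. a x (Suc m) = (if m = 0 then c else 0) + (\<Sum>y\<in>Y. L y (a y m))"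
  shows "a x sums (c + (\<Sum>y\<in>Y. L y (suminf (a y))))"
proof -
  have "(\<lambda>m. if m = 0 then c else 0) sums c"
    by (rule sums_single)
  moreover have "(\<lambda>m. \<Sum>y\<in>Y. L y (a y m)) sums (\<Sum>y\<in>Y. L y (suminf (a y)))"
  proof (rule sums_sum)
    fix y show "(\<lambda>m. L y (a y m)) sums L y (suminf (a y))"
      by (rule bounded_linear.sums[OF assms(2) summable_sums[OF assms(1)]])
  qed
  ultimately have "(\<lambda>m. a x (Suc m)) sums (c + (\<Sum>y\<in>Y. L y (suminf (a y))))"
    unfolding assms(4) by (rule sums_add)
  then show ?thesis
    using assms(3) sums_Suc_iff[of "a x"] by simp
qed

definition hitprob_at :: "('n::finite \<Rightarrow> 'n \<Rightarrow> real) \<Rightarrow> 'n \<Rightarrow> 'n \<Rightarrow> 'n \<Rightarrow> nat \<Rightarrow> real" where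
  "hitprob_at w a b k m = (\<Sum>vs\<in>hitpaths b k m. pathprob w a vs)"

definition hit_holonomy_at :: "('n::finite \<Rightarrow> 'n \<Rightarrow> real) \<Rightarrow> ('n \<Rightarrow> 'n \<Rightarrow> real^'d::finite^'d)
    \<Rightarrow> 'n \<Rightarrow> 'n \<Rightarrow> 'n \<Rightarrow> nat \<Rightarrow> real^'d^'d" where
  "hit_holonomy_at w \<sigma> a b k m = (\<Sum>vs\<in>hitpaths b k m. pathprob w a vs *\<^sub>R pathhol \<sigma> a vs)"

text \<open>Omega1 before conditioning on T_b < T_k; unlike Omega1 it involves no division by a
  possibly vanishing probability.\<close>
definition hit_holonomy :: "('n::finite \<Rightarrow> 'n \<Rightarrow> real) \<Rightarrow> ('n \<Rightarrow> 'n \<Rightarrow> real^'d::finite^'d)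
    \<Rightarrow> 'n \<Rightarrow> 'n \<Rightarrow> 'n \<Rightarrow> real^'d^'d" where
  "hit_holonomy w \<sigma> a b k = (\<Sum>m. hit_holonomy_at w \<sigma> a b k m)"

lemma hitprob_eq_suminf: "hitprob w a b k = (\<Sum>m. hitprob_at w a b k m)"
  by (simp add: hitprob_def hitprob_at_def)

lemma Omega1_eq_hit_holonomy:
  "Omega1 w \<sigma> a b k = (1 / hitprob w a b k) *\<^sub>R hit_holonomy w \<sigma> a b k"
  by (simp add: Omega1_def hit_holonomy_def hit_holonomy_at_def)

lemma hitprob_at_0 [simp]: "hitprob_at w a b k 0 = 0"
  by (simp add: hitprob_at_def)

lemma hit_holonomy_at_0 [simp]: "hit_holonomy_at w \<sigma> a b k 0 = 0"
  by (simp add: hit_holonomy_at_def)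

lemma hitprob_at_Suc:
  "hitprob_at w x b k (Suc m) =
     (if m = 0 then tprob w x b else 0) + (\<Sum>y\<in>- {b, k}. tprob w x y * hitprob_at w y b k m)"
  by (simp add: hitprob_at_def sum_hitpaths_Suc sum_distrib_left)

lemma hit_holonomy_at_Suc:
  "hit_holonomy_at w \<sigma> x b k (Suc m) =
     (if m = 0 then tprob w x b *\<^sub>R \<sigma> x b else 0)
     + (\<Sum>y\<in>- {b, k}. tprob w x y *\<^sub>R (\<sigma> x y ** hit_holonomy_at w \<sigma> y b k m))"
  by (simp add: hit_holonomy_at_def sum_hitpaths_Suc matrix_mul_sum_right matrix_scalar_ac
      scalar_matrix_assoc scaleR_sum_right)

context network
begin

lemma pathprob_nonneg: "pathprob w x vs \<ge> 0"
  by (induction vs arbitrary: x) (simp_all add: tprob_nonneg)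

lemma hitprob_at_nonneg: "hitprob_at w x b k m \<ge> 0"
  by (simp add: hitprob_at_def sum_nonneg pathprob_nonneg)

lemma sum_hitprob_at_le_1: "(\<Sum>m<N. hitprob_at w x b k m) \<le> 1"
proof (induction N arbitrary: x)
  case (Suc N)
  have "(\<Sum>m<Suc N. hitprob_at w x b k m) = (\<Sum>m<N. hitprob_at w x b k (Suc m))"
    by (subst sum.lessThan_Suc_shift) simp
  also have "\<dots> = (\<Sum>m<N. if m = 0 then tprob w x b else 0)
      + (\<Sum>y\<in>- {b, k}. tprob w x y * (\<Sum>m<N. hitprob_at w y b k m))"
    by (simp add: hitprob_at_Suc sum.distrib sum_distrib_left sum.swap[of _ "{..<N}"])
  also have "\<dots> \<le> tprob w x b + (\<Sum>y\<in>- {b, k}. tprob w x y)"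
    by (intro add_mono sum_mono mult_left_le) (simp_all add: Suc.IH tprob_nonneg)
  also have "\<dots> = (\<Sum>y\<in>insert b (- {b, k}). tprob w x y)"
    by simp
  also have "\<dots> \<le> (\<Sum>y\<in>UNIV. tprob w x y)"
    by (rule sum_mono2) (simp_all add: tprob_nonneg)
  finally show ?case
    using sum_tprob_le_1[of x] by linarith
qed simp

lemma summable_hitprob_at: "summable (hitprob_at w x b k)"
proof (rule bounded_imp_summable)
  show "(\<Sum>m\<le>n. hitprob_at w x b k m) \<le> 1" for n
    using sum_hitprob_at_le_1[of x b k "Suc n"] by (simp add: lessThan_Suc_atMost)
qed (rule hitprob_at_nonneg)

lemma hitprob_first_step:
  "hitprob w x b k = tprob w x b + (\<Sum>y\<in>- {b, k}. tprob w x y * hitprob w y b k)"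
  using sums_first_step[of "\<lambda>y. hitprob_at w y b k" "\<lambda>y t. tprob w x y * t" x "tprob w x b" "- {b, k}"]
  by (simp add: summable_hitprob_at bounded_linear_mult_right hitprob_at_Suc sums_iff
      flip: hitprob_eq_suminf)

end

locale connection_network = network w for w :: "'n::finite \<Rightarrow> 'n \<Rightarrow> real" +
  fixes \<sigma> :: "'n \<Rightarrow> 'n \<Rightarrow> real^'d::finite^'d"
  assumes connection: "connection w \<sigma>"
begin

lemma orthogonal_sigma: "w x y > 0 \<Longrightarrow> orthogonal_matrix (\<sigma> x y)"
  using connection by (simp add: connection_def)

lemma orthogonal_pathhol: "pathprob w x vs \<noteq> 0 \<Longrightarrow> orthogonal_matrix (pathhol \<sigma> x vs)"
proof (induction vs arbitrary: x)
  case (Cons y vs)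
  then have "w x y \<noteq> 0" "pathprob w y vs \<noteq> 0"
    by (auto simp: tprob_def)
  then show ?case
    using Cons.IH weight_nonneg[of x y]
    by (simp add: orthogonal_matrix_mul orthogonal_sigma)
qed (simp add: orthogonal_matrix_id)

lemma norm_hit_holonomy_at_le:
  "norm (hit_holonomy_at w \<sigma> x b k m) \<le> real CARD('d) * hitprob_at w x b k m"
proof -
  have "norm (pathprob w x vs *\<^sub>R pathhol \<sigma> x vs) \<le> real CARD('d) * pathprob w x vs" for vs
  proof (cases "pathprob w x vs = 0")
    case False
    then show ?thesis
      using norm_orthogonal_matrix_le[OF orthogonal_pathhol[OF False]] pathprob_nonneg[of x vs]
      by (simp add: mult.commute mult_left_mono)
  qed simp
  then show ?thesis
    unfolding hit_holonomy_at_def hitprob_at_def sum_distrib_left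
    by (intro order_trans[OF norm_sum] sum_mono)
qed

lemma summable_hit_holonomy_at: "summable (hit_holonomy_at w \<sigma> x b k)"
  by (rule summable_comparison_test'[OF summable_mult[OF summable_hitprob_at] norm_hit_holonomy_at_le])

lemma hit_holonomy_first_step:
  "hit_holonomy w \<sigma> x b k =
     tprob w x b *\<^sub>R \<sigma> x b + (\<Sum>y\<in>- {b, k}. tprob w x y *\<^sub>R (\<sigma> x y ** hit_holonomy w \<sigma> y b k))"
  using sums_first_step[of "\<lambda>y. hit_holonomy_at w \<sigma> y b k" "\<lambda>y B. tprob w x y *\<^sub>R (\<sigma> x y ** B)"
      x "tprob w x b *\<^sub>R \<sigma> x b" "- {b, k}"]
  by (simp add: summable_hit_holonomy_at bounded_linear_scaleR_matrix_mul hit_holonomy_at_Suc sums_iff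
      flip: hit_holonomy_def)

lemma deg_scaleR_hit_holonomy:
  "deg w x *\<^sub>R hit_holonomy w \<sigma> x b k =
     w x b *\<^sub>R \<sigma> x b + (\<Sum>y\<in>- {b, k}. w x y *\<^sub>R (\<sigma> x y ** hit_holonomy w \<sigma> y b k))"
  by (subst hit_holonomy_first_step)
    (simp add: scaleR_add_right scaleR_sum_right deg_mult_tprob flip: mult.assoc)

lemma hitprob_scaleR_Omega1: "hitprob w x b k *\<^sub>R Omega1 w \<sigma> x b k = hit_holonomy w \<sigma> x b k"
proof (cases "hitprob w x b k = 0")
  case True
  then have "hitprob_at w x b k m = 0" for m
    unfolding hitprob_eq_suminf using suminf_eq_zero_iff[OF summable_hitprob_at hitprob_at_nonneg] by blast
  then have "hit_holonomy_at w \<sigma> x b k m = 0" for m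
    using norm_hit_holonomy_at_le[of x b k m] by simp
  then show ?thesis using True by (simp add: hit_holonomy_def)
qed (simp add: Omega1_eq_hit_holonomy)

end

section \<open>Moore-Penrose inverses and Schur complements\<close>

lemma matrix_diff_ldistrib: "(A::real^'m^'n) ** ((B::real^'p^'m) - C) = A ** B - A ** C"
  by (simp add: vec_eq_iff matrix_matrix_mult_def sum_subtractf right_diff_distrib)

lemma matrix_add_rdistrib: "((A::real^'m^'n) + B) ** (C::real^'p^'m) = A ** C + B ** C"
  by (simp add: vec_eq_iff matrix_matrix_mult_def sum.distrib distrib_right)

lemma matrix_diff_rdistrib: "((A::real^'m^'n) - B) ** (C::real^'p^'m) = A ** C - B ** C"
  by (simp add: vec_eq_iff matrix_matrix_mult_def sum_subtractf left_diff_distrib)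

lemma transpose_diff: "transpose ((A::real^'m^'n) - B) = transpose A - transpose B"
  by (simp add: vec_eq_iff transpose_def)

definition penrose_inverse :: "real^'n::finite^'n \<Rightarrow> real^'n^'n \<Rightarrow> bool" where
  "penrose_inverse A X \<longleftrightarrow> A ** X ** A = A \<and> X ** A ** X = X \<and>
     transpose (A ** X) = A ** X \<and> transpose (X ** A) = X ** A"

lemma penrose_inverse_unique:
  assumes "penrose_inverse A X" and "penrose_inverse A Y"
  shows "X = Y"
proof -
  have x: "A ** X ** A = A" "X ** A ** X = X" "transpose (A ** X) = A ** X" "transpose (X ** A) = X ** A"
    and y: "A ** Y ** A = A" "Y ** A ** Y = Y" "transpose (A ** Y) = A ** Y" "transpose (Y ** A) = Y ** A"
    using assms by (simp_all add: penrose_inverse_def)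
  have "X = X ** transpose (A ** X)" using x(2,3) by (simp add: matrix_mul_assoc)
  also have "\<dots> = X ** transpose (A ** Y ** A ** X)" using y(1) by simp
  also have "\<dots> = X ** (A ** X) ** (A ** Y)"
    using x(3) y(3) by (simp add: matrix_transpose_mul matrix_mul_assoc)
  also have "\<dots> = X ** A ** Y" using x(2) by (simp add: matrix_mul_assoc)
  finally have X: "X = X ** A ** Y" .
  have "Y = transpose (Y ** A) ** Y" using y(2,4) by simp
  also have "\<dots> = transpose (Y ** (A ** X ** A)) ** Y" using x(1) by simp
  also have "\<dots> = (X ** A) ** (Y ** A) ** Y"
    using x(4) y(4) by (simp add: matrix_transpose_mul matrix_mul_assoc)
  also have "\<dots> = X ** A ** Y" using y(2) by (metis matrix_mul_assoc)
  finally show ?thesis using X by simp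
qed

definition penrose_inverse_on :: "'i set \<Rightarrow> ('i \<Rightarrow> 'i \<Rightarrow> real) \<Rightarrow> ('i \<Rightarrow> 'i \<Rightarrow> real) \<Rightarrow> bool" where
  "penrose_inverse_on S A X \<longleftrightarrow> (\<forall>x y. (x \<notin> S \<or> y \<notin> S) \<longrightarrow> X x y = 0) \<and>
     (\<forall>x\<in>S. \<forall>y\<in>S. mmul S (mmul S A X) A x y = A x y) \<and>
     (\<forall>x\<in>S. \<forall>y\<in>S. mmul S (mmul S X A) X x y = X x y) \<and>
     (\<forall>x\<in>S. \<forall>y\<in>S. mmul S A X x y = mmul S A X y x) \<and>
     (\<forall>x\<in>S. \<forall>y\<in>S. mmul S X A x y = mmul S X A y x)"

lemma pinv_eq_The: "pinv S A = (THE X. penrose_inverse_on S A X)"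
  by (simp add: pinv_def penrose_inverse_on_def)

definition matrix_on :: "'i::finite set \<Rightarrow> ('i \<Rightarrow> 'i \<Rightarrow> real) \<Rightarrow> real^'i^'i" where
  "matrix_on S A = (\<chi> x y. if x \<in> S \<and> y \<in> S then A x y else 0)"

lemma matrix_on_UNIV [simp]: "matrix_on UNIV A $ x $ y = A x y"
  by (simp add: matrix_on_def)

lemma matrix_on_eq_iff: "matrix_on S A = matrix_on S B \<longleftrightarrow> (\<forall>x\<in>S. \<forall>y\<in>S. A x y = B x y)"
  by (auto simp: matrix_on_def vec_eq_iff)

lemma transpose_matrix_on: "transpose (matrix_on S A) = matrix_on S (\<lambda>x y. A y x)"
  by (auto simp: matrix_on_def vec_eq_iff transpose_def)

lemma matrix_on_mmul: "matrix_on S (mmul S A B) = matrix_on S A ** matrix_on S B"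
proof -
  have "(\<Sum>z\<in>UNIV. (if x \<in> S \<and> z \<in> S then A x z else 0) * (if z \<in> S \<and> y \<in> S then B z y else 0))
      = (if x \<in> S \<and> y \<in> S then (\<Sum>z\<in>S. A x z * B z y) else 0)" for x y
    by (simp add: if_distrib if_distribR sum.If_cases Int_def)
  then show ?thesis by (simp add: matrix_on_def mmul_def matrix_matrix_mult_def vec_eq_iff)
qed

lemma penrose_inverse_on_iff:
  "penrose_inverse_on S A X \<longleftrightarrow>
     (\<forall>x y. (x \<notin> S \<or> y \<notin> S) \<longrightarrow> X x y = 0) \<and> penrose_inverse (matrix_on S A) (matrix_on S X)"
  by (simp add: penrose_inverse_on_def penrose_inverse_def transpose_matrix_on
      flip: matrix_on_mmul add: matrix_on_eq_iff) blast

lemma pinv_eqI: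
  fixes A X :: "'i::finite \<Rightarrow> 'i \<Rightarrow> real"
  assumes "penrose_inverse_on S A X"
  shows "pinv S A = X"
  unfolding pinv_eq_The
proof (rule the_equality)
  fix Y assume "penrose_inverse_on S A Y"
  then have "matrix_on S Y = matrix_on S X" and "\<forall>x y. (x \<notin> S \<or> y \<notin> S) \<longrightarrow> Y x y = 0"
    using assms penrose_inverse_unique by (auto simp: penrose_inverse_on_iff)
  then show "Y = X"
    using assms by (fastforce simp: penrose_inverse_on_iff matrix_on_eq_iff)
qed (rule assms)

lemma matrix_on_identity_mult:
  "matrix_on S (\<lambda>x y. if x = y then 1 else 0) ** matrix_on S A = matrix_on S A"
  "matrix_on S A ** matrix_on S (\<lambda>x y. if x = y then 1 else 0) = matrix_on S A"
  by (simp_all flip: matrix_on_mmul add: matrix_on_eq_iff mmul_def if_distrib if_distribR cong: if_cong)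

lemma inverse_imp_penrose_inverse_on:
  fixes A N :: "'i::finite \<Rightarrow> 'i \<Rightarrow> real"
  assumes "\<And>x y. x \<notin> S \<or> y \<notin> S \<Longrightarrow> N x y = 0"
    and "\<And>x y. x \<in> S \<Longrightarrow> y \<in> S \<Longrightarrow> mmul S A N x y = (if x = y then 1 else 0)"
    and "\<And>x y. x \<in> S \<Longrightarrow> y \<in> S \<Longrightarrow> mmul S N A x y = (if x = y then 1 else 0)"
  shows "penrose_inverse_on S A N"
proof -
  let ?I = "matrix_on S (\<lambda>x y. if x = y then 1 else 0)"
  have "matrix_on S A ** matrix_on S N = ?I" "matrix_on S N ** matrix_on S A = ?I"
    using assms(2,3) by (simp_all flip: matrix_on_mmul add: matrix_on_eq_iff)
  moreover have "transpose ?I = ?I"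
    by (auto simp: transpose_matrix_on matrix_on_eq_iff)
  ultimately show ?thesis
    using assms(1) by (simp add: penrose_inverse_on_iff penrose_inverse_def matrix_on_identity_mult flip: matrix_mul_assoc)
qed

definition identity_extension :: "'i set \<Rightarrow> ('i::finite \<Rightarrow> 'i \<Rightarrow> real) \<Rightarrow> real^'i^'i" where
  "identity_extension S A = (\<chi> x y. if x \<in> S \<and> y \<in> S then A x y else if x = y then 1 else 0)"

lemma identity_extension_row:
  "x \<in> S \<Longrightarrow> (\<Sum>y\<in>UNIV. identity_extension S A $ x $ y * f y) = (\<Sum>y\<in>S. A x y * f y)"
  by (rule sum.mono_neutral_cong_right) (auto simp: identity_extension_def)

lemma identity_extension_column:
  "y \<in> S \<Longrightarrow> (\<Sum>x\<in>UNIV. f x * identity_extension S A $ x $ y) = (\<Sum>x\<in>S. f x * A x y)"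
  by (rule sum.mono_neutral_cong_right) (auto simp: identity_extension_def)

lemma identity_extension_injective:
  fixes A :: "'i::finite \<Rightarrow> 'i \<Rightarrow> real"
  assumes inj: "\<And>z x. \<forall>x\<in>S. (\<Sum>y\<in>S. A x y * z y) = 0 \<Longrightarrow> x \<in> S \<Longrightarrow> z x = 0"
    and Ez: "identity_extension S A *v z = 0"
  shows "z = 0"
proof -
  have "z $ x = 0" if "x \<notin> S" for x
  proof -
    have "(identity_extension S A *v z) $ x = (\<Sum>y\<in>UNIV. if y = x then z $ y else 0)"
      unfolding matrix_vector_mult_def
      by (rule vec_lambda_beta[THEN trans], rule sum.cong) (auto simp: identity_extension_def that)
    then show ?thesis using Ez by simp
  qed
  moreover have "z $ x = 0" if "x \<in> S" for x
  proof (rule inj[OF _ that], intro ballI)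
    fix x assume "x \<in> S"
    then have "(\<Sum>y\<in>S. A x y * z $ y) = (identity_extension S A *v z) $ x"
      using identity_extension_row[of x S A "\<lambda>y. z $ y"] by (simp add: matrix_vector_mult_def)
    then show "(\<Sum>y\<in>S. A x y * z $ y) = 0" using Ez by simp
  qed
  ultimately show "z = 0" by (metis vec_eq_iff zero_index)
qed

lemma inverse_on_exists:
  fixes A :: "'i::finite \<Rightarrow> 'i \<Rightarrow> real"
  assumes "\<And>z x. \<forall>x\<in>S. (\<Sum>y\<in>S. A x y * z y) = 0 \<Longrightarrow> x \<in> S \<Longrightarrow> z x = 0"
  obtains N where "\<And>x y. x \<notin> S \<or> y \<notin> S \<Longrightarrow> N x y = 0"
    and "\<And>x y. x \<in> S \<Longrightarrow> y \<in> S \<Longrightarrow> mmul S A N x y = (if x = y then 1 else 0)"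
    and "\<And>x y. x \<in> S \<Longrightarrow> y \<in> S \<Longrightarrow> mmul S N A x y = (if x = y then 1 else 0)"
proof -
  let ?E = "identity_extension S A"
  have "z = 0" if "?E *v z = 0" for z
    by (rule identity_extension_injective[of S A, OF _ that]) (use assms in blast)
  then obtain K where KE: "K ** ?E = mat 1"
    using matrix_left_invertible_ker by blast
  then have EK: "?E ** K = mat 1"
    using matrix_left_right_inverse by blast
  define N where "N x y = (if x \<in> S \<and> y \<in> S then K $ x $ y else 0)" for x y
  show ?thesis
  proof
    show "N x y = 0" if "x \<notin> S \<or> y \<notin> S" for x y
      using that by (auto simp: N_def)
    show "mmul S A N x y = (if x = y then 1 else 0)" if "x \<in> S" "y \<in> S" for x y
    proof -
      have "mmul S A N x y = (?E ** K) $ x $ y"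
        using that by (simp add: mmul_def N_def matrix_matrix_mult_def identity_extension_row)
      then show ?thesis using EK by (simp add: mat_def)
    qed
    show "mmul S N A x y = (if x = y then 1 else 0)" if "x \<in> S" "y \<in> S" for x y
    proof -
      have "mmul S N A x y = (K ** ?E) $ x $ y"
        using that by (simp add: mmul_def N_def matrix_matrix_mult_def identity_extension_column)
      then show ?thesis using KE by (simp add: mat_def)
    qed
  qed
qed

lemma pinv_left_inverse:
  fixes A :: "'i::finite \<Rightarrow> 'i \<Rightarrow> real"
  assumes "\<And>z x. \<forall>x\<in>S. (\<Sum>y\<in>S. A x y * z y) = 0 \<Longrightarrow> x \<in> S \<Longrightarrow> z x = 0"
    and "x \<in> S" "y \<in> S"
  shows "mmul S (pinv S A) A x y = (if x = y then 1 else 0)"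
proof -
  obtain N where N: "\<And>x y. x \<notin> S \<or> y \<notin> S \<Longrightarrow> N x y = 0"
    "\<And>x y. x \<in> S \<Longrightarrow> y \<in> S \<Longrightarrow> mmul S A N x y = (if x = y then 1 else 0)"
    "\<And>x y. x \<in> S \<Longrightarrow> y \<in> S \<Longrightarrow> mmul S N A x y = (if x = y then 1 else 0)"
    by (rule inverse_on_exists[of S A]) (use assms(1) in blast)+
  then have "pinv S A = N"
    by (intro pinv_eqI inverse_imp_penrose_inverse_on)
  then show ?thesis using N(3) assms(2,3) by simp
qed

lemma schur_eq_harmonic_extension:
  fixes M :: "'i::finite \<Rightarrow> 'i \<Rightarrow> real"
  assumes left_inverse:
      "\<And>r s. r \<in> - S \<Longrightarrow> s \<in> - S \<Longrightarrow> mmul (- S) (pinv (- S) M) M r s = (if r = s then 1 else 0)"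
    and harmonic: "\<And>s. s \<in> - S \<Longrightarrow> (\<Sum>u\<in>- S. M s u * g u) = - M s q"
  shows "schur S M p q = M p q + (\<Sum>r\<in>- S. M p r * g r)"
proof -
  let ?N = "pinv (- S) M"
  have solve: "(\<Sum>s\<in>- S. ?N r s * M s q) = - g r" if r: "r \<in> - S" for r
  proof -
    have "(\<Sum>s\<in>- S. ?N r s * M s q) = (\<Sum>s\<in>- S. ?N r s * - (\<Sum>u\<in>- S. M s u * g u))"
      by (rule sum.cong) (simp_all add: harmonic)
    also have "\<dots> = - (\<Sum>s\<in>- S. \<Sum>u\<in>- S. ?N r s * M s u * g u)"
      by (simp add: sum_distrib_left mult.assoc sum_negf)
    also have "\<dots> = - (\<Sum>u\<in>- S. mmul (- S) ?N M r u * g u)"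
      by (subst sum.swap) (simp add: mmul_def sum_distrib_right)
    also have "\<dots> = - g r"
      using r by (simp add: left_inverse if_distrib if_distribR cong: if_cong)
    finally show ?thesis .
  qed
  have "(\<Sum>r\<in>- S. \<Sum>s\<in>- S. M p r * ?N r s * M s q) = (\<Sum>r\<in>- S. M p r * - g r)"
    by (simp add: mult.assoc solve flip: sum_distrib_left)
  then show ?thesis by (simp add: schur_def sum_negf)
qed

lemma penrose_inverse_diff_projection:
  fixes A P K :: "real^'n::finite^'n"
  assumes "A ** P = 0" "P ** A = 0" "P ** P = P" "transpose P = P"
    and "K ** (A + P) = mat 1"
  shows "penrose_inverse A (K - P)"
proof -
  have "(A + P) ** K = mat 1"
    using assms(5) matrix_left_right_inverse by blast
  have "P ** K = (P ** (A + P)) ** K"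
    using assms(2,3) by (simp add: matrix_add_ldistrib)
  then have "P ** K = P"
    using \<open>(A + P) ** K = mat 1\<close> by (simp flip: matrix_mul_assoc)
  have "K ** P = K ** ((A + P) ** P)"
    using assms(1,3) by (simp add: matrix_add_rdistrib)
  then have "K ** P = P"
    using assms(5) by (simp add: matrix_mul_assoc)
  have AX: "A ** (K - P) = mat 1 - P"
    using \<open>(A + P) ** K = mat 1\<close> \<open>P ** K = P\<close> assms(1)
    by (simp add: matrix_diff_ldistrib matrix_add_rdistrib eq_diff_eq)
  have XA: "(K - P) ** A = mat 1 - P"
    using assms(2,5) \<open>K ** P = P\<close>
    by (simp add: matrix_diff_rdistrib matrix_add_ldistrib eq_diff_eq)
  have "A ** (K - P) ** A = A"
    unfolding AX using assms(2) by (simp add: matrix_diff_rdistrib)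
  moreover have "(K - P) ** A ** (K - P) = K - P"
    unfolding XA using \<open>P ** K = P\<close> assms(3) by (simp add: matrix_diff_rdistrib matrix_diff_ldistrib)
  moreover have "transpose (mat 1 - P) = mat 1 - P"
    using assms(4) by (simp add: transpose_diff)
  ultimately show ?thesis
    unfolding penrose_inverse_def AX XA by blast
qed

lemma quadratic_form_penrose_inverse:
  fixes A X :: "real^'n::finite^'n"
  assumes "A ** X ** A = A" and "transpose A = A" and "A *v f = v"
  shows "v \<bullet> (X *v v) = f \<bullet> v"
proof -
  have "v \<bullet> (X *v v) = (f v* transpose A) \<bullet> (X *v (A *v f))"
    using assms(3) by simp
  also have "\<dots> = f \<bullet> ((A ** X ** A) *v f)"
    unfolding dot_lmul_matrix assms(2) matrix_vector_mul_assoc matrix_mul_assoc ..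
  also have "\<dots> = f \<bullet> v"
    using assms(1,3) by simp
  finally show ?thesis .
qed

section \<open>Effective conductance\<close>

definition mean_projection :: "real^'n::finite^'n" where
  "mean_projection = (\<chi> x y. 1 / real CARD('n))"

lemma mean_projection_idem: "mean_projection ** mean_projection = mean_projection"
  by (simp add: mean_projection_def vec_eq_iff matrix_matrix_mult_def power2_eq_square)

lemma transpose_mean_projection: "transpose mean_projection = mean_projection"
  by (simp add: mean_projection_def vec_eq_iff transpose_def)

context network
begin

lemma graph_laplacian_mean_injective:
  assumes Kz: "(matrix_on UNIV (graph_laplacian w) + mean_projection) *v z = 0"
  shows "z = 0"
proof -
  let ?n = "real CARD('n)"
  have entry: "((matrix_on UNIV (graph_laplacian w) + mean_projection) *v z) $ x
      = (\<Sum>y\<in>UNIV. graph_laplacian w x y * z $ y) + (\<Sum>y\<in>UNIV. z $ y) / ?n" for x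
    by (simp add: mean_projection_def matrix_vector_mult_def distrib_right sum.distrib sum_divide_distrib)
  have "(\<Sum>x\<in>UNIV. \<Sum>y\<in>UNIV. graph_laplacian w x y * z $ y) = 0"
    by (subst sum.swap) (simp add: sum_graph_laplacian_column flip: sum_distrib_right)
  then have total: "(\<Sum>y\<in>UNIV. z $ y) = 0"
    using arg_cong[OF Kz, of "\<lambda>v. \<Sum>x\<in>UNIV. v $ x"] by (simp add: entry sum.distrib)
  then have const: "z $ x = z $ y" for x y
    using Kz entry by (intro graph_laplacian_kernel) (simp add: vec_eq_iff)
  have "(\<Sum>y\<in>UNIV. z $ y) = (\<Sum>y\<in>(UNIV :: 'n set). z $ x)" for x
    by (rule sum.cong) (auto intro: const)
  then have "(\<Sum>y\<in>UNIV. z $ y) = ?n * z $ x" for x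
    by simp
  then show "z = 0"
    using total by (simp add: vec_eq_iff)
qed

text \<open>The pseudo-inverse is (L + P)^-1 - P for the mean projection P onto the constants,
  which span the kernel of L.\<close>
lemma penrose_inverse_pinv_graph_laplacian:
  "penrose_inverse (matrix_on UNIV (graph_laplacian w)) (matrix_on UNIV (pinv UNIV (graph_laplacian w)))"
proof -
  let ?L = "matrix_on UNIV (graph_laplacian w)" and ?P = "mean_projection :: real^'n^'n"
  have row_sum: "(\<Sum>y\<in>UNIV. graph_laplacian w x y) = 0" for x
    by (simp add: graph_laplacian_def sum_subtractf deg_def)
  have "?L ** ?P = 0"
    by (simp add: mean_projection_def vec_eq_iff matrix_matrix_mult_def row_sum flip: sum_divide_distrib)
  moreover have "?P ** ?L = 0"
    by (simp add: mean_projection_def vec_eq_iff matrix_matrix_mult_def sum_graph_laplacian_column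
        flip: sum_divide_distrib)
  moreover obtain K where "K ** (?L + ?P) = mat 1"
    using graph_laplacian_mean_injective matrix_left_invertible_ker by blast
  ultimately have X: "penrose_inverse ?L (K - ?P)"
    by (intro penrose_inverse_diff_projection mean_projection_idem transpose_mean_projection)
  have KP: "matrix_on UNIV (\<lambda>x y. (K - ?P) $ x $ y) = K - ?P"
    by (simp add: vec_eq_iff)
  then have "pinv UNIV (graph_laplacian w) = (\<lambda>x y. (K - ?P) $ x $ y)"
    using X by (intro pinv_eqI) (simp add: penrose_inverse_on_iff)
  then show ?thesis
    using X KP by simp
qed

end

text \<open>Harmonic off i and j with boundary values 1 and 0; at the terminals it differs from
  hitprob, which only looks at times t \<ge> 1.\<close>
definition voltage :: "('n::finite \<Rightarrow> 'n \<Rightarrow> real) \<Rightarrow> 'n \<Rightarrow> 'n \<Rightarrow> 'n \<Rightarrow> real" where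
  "voltage w i j x = (if x = i then 1 else if x = j then 0 else hitprob w x i j)"

locale two_terminal_network = network w for w :: "'n::finite \<Rightarrow> 'n \<Rightarrow> real" +
  fixes i j :: 'n
  assumes terminals_distinct: "i \<noteq> j"
begin

lemma deg_pos: "deg w x > 0"
proof -
  obtain y where "y \<noteq> x" using terminals_distinct by metis
  with connected[of x y] obtain z where "w x z > 0"
    by (metis (no_types, lifting) case_prodD converse_rtranclE mem_Collect_eq)
  then show ?thesis using weight_le_deg[of x z] by linarith
qed

lemma sum_tprob_eq_1: "(\<Sum>y\<in>UNIV. tprob w x y) = 1"
  using deg_pos[of x] by (simp add: tprob_def deg_def sum_divide_distrib[symmetric])

lemma hitprob_complement: "hitprob w x i j + hitprob w x j i = 1"
proof -
  define g where "g x = (if x \<in> {i, j} then 0 else hitprob w x i j + hitprob w x j i - 1)" for x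
  have sum_eq: "hitprob w r i j + hitprob w r j i = 1 + (\<Sum>y\<in>UNIV. tprob w r y * g y)" for r
  proof -
    have "hitprob w r i j + hitprob w r j i = tprob w r i + tprob w r j
        + (\<Sum>y\<in>- {i, j}. tprob w r y * (hitprob w y i j + hitprob w y j i))"
      using hitprob_first_step[of r i j] hitprob_first_step[of r j i]
      by (simp add: insert_commute sum.distrib distrib_left)
    also have "\<dots> = tprob w r i + tprob w r j + (\<Sum>y\<in>- {i, j}. tprob w r y)
        + (\<Sum>y\<in>- {i, j}. tprob w r y * g y)"
      by (simp add: g_def algebra_simps flip: sum.distrib)
    also have "\<dots> = 1 + (\<Sum>y\<in>UNIV. tprob w r y * g y)"
      using sum_UNIV_remove2[OF terminals_distinct, of "tprob w r"]
        sum_UNIV_remove2[OF terminals_distinct, of "\<lambda>y. tprob w r y * g y"] sum_tprob_eq_1[of r]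
      by (simp add: g_def)
    finally show ?thesis .
  qed
  have "g r = 0" for r
  proof (rule harmonic_vanishing[of "- {i, j}"])
    show "deg w r * g r = (\<Sum>y\<in>UNIV. w r y * g y)" if "r \<in> - {i, j}" for r
      using that sum_eq[of r] by (simp add: g_def sum_weight_mult)
  qed (auto simp: g_def)
  then show ?thesis using sum_eq[of x] by simp
qed

lemma graph_laplacian_voltage:
  "(\<Sum>y\<in>UNIV. graph_laplacian w x y * voltage w i j y) =
     (if x = i then deg w i * hitprob w i j i else 0) - (if x = j then deg w j * hitprob w j i j else 0)"
proof -
  have "(\<Sum>y\<in>UNIV. tprob w x y * voltage w i j y) = hitprob w x i j"
    using sum_UNIV_remove2[OF terminals_distinct, of "\<lambda>y. tprob w x y * voltage w i j y"]
      hitprob_first_step[of x i j] terminals_distinct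
    by (simp add: voltage_def)
  then have "(\<Sum>y\<in>UNIV. graph_laplacian w x y * voltage w i j y) = deg w x * (voltage w i j x - hitprob w x i j)"
    by (simp add: graph_laplacian_apply sum_weight_mult right_diff_distrib)
  moreover have "hitprob w i i j = 1 - hitprob w i j i"
    using hitprob_complement[of i] by simp
  ultimately show ?thesis
    using terminals_distinct by (simp add: voltage_def)
qed

text \<open>The Laplacian has zero column sums, so the current leaving i equals the current entering j.\<close>
lemma deg_hitprob_symmetric: "deg w i * hitprob w i j i = deg w j * hitprob w j i j"
proof -
  have "(\<Sum>x\<in>UNIV. \<Sum>y\<in>UNIV. graph_laplacian w x y * voltage w i j y) = 0"
    by (subst sum.swap) (simp add: sum_graph_laplacian_column flip: sum_distrib_right)
  then show ?thesis
    by (simp add: graph_laplacian_voltage sum_subtractf)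
qed

lemma hitprob_escape_nonzero: "hitprob w i j i \<noteq> 0"
proof
  assume "hitprob w i j i = 0"
  then have "voltage w i j i = voltage w i j j"
    using deg_hitprob_symmetric by (intro graph_laplacian_kernel) (simp add: graph_laplacian_voltage)
  then show False using terminals_distinct by (simp add: voltage_def)
qed

lemma eff_conductance_eq: "eff_conductance w i j = deg w i * hitprob w i j i"
proof -
  let ?L = "matrix_on UNIV (graph_laplacian w)"
  let ?X = "matrix_on UNIV (pinv UNIV (graph_laplacian w))"
  define c where "c = deg w i * hitprob w i j i"
  define e :: "real^'n" where "e = (\<chi> x. (if x = i then 1 else 0) - (if x = j then 1 else 0))"
  define v :: "real^'n" where "v = (\<chi> x. voltage w i j x)"
  have Lv: "?L *v v = c *\<^sub>R e"
    using deg_hitprob_symmetric terminals_distinct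
    by (simp add: vec_eq_iff matrix_vector_mult_def v_def e_def c_def graph_laplacian_voltage)
  have "c \<noteq> 0"
    using deg_pos[of i] hitprob_escape_nonzero by (simp add: c_def)
  have "eff_resistance w i j = e \<bullet> (?X *v e)"
    by (simp add: eff_resistance_def e_def inner_vec_def matrix_vector_mult_def sum_distrib_left mult_ac)
  also have "\<dots> = ((1 / c) *\<^sub>R v) \<bullet> e"
  proof (rule quadratic_form_penrose_inverse)
    show "?L ** ?X ** ?L = ?L"
      using penrose_inverse_pinv_graph_laplacian by (simp add: penrose_inverse_def)
    show "transpose ?L = ?L"
      by (simp add: vec_eq_iff transpose_def graph_laplacian_def weight_sym)
    show "?L *v ((1 / c) *\<^sub>R v) = e"
      using Lv \<open>c \<noteq> 0\<close> by (simp add: matrix_vector_mult_scaleR)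
  qed
  also have "\<dots> = (1 / c) * (v \<bullet> e)"
    by simp
  also have "v \<bullet> e = 1"
    unfolding inner_vec_def
    using sum_UNIV_remove2[OF terminals_distinct, of "\<lambda>x. v $ x \<bullet> e $ x"] terminals_distinct
    by (simp add: v_def e_def voltage_def)
  finally show ?thesis
    using \<open>c \<noteq> 0\<close> by (simp add: eff_conductance_def c_def)
qed

end

section \<open>The conductance matrix\<close>

context network
begin

lemma conn_laplacian_eq:
  "conn_laplacian w \<sigma> (x, a) (y, c) = (if x = y \<and> a = c then deg w x else 0) - w x y * \<sigma> x y $ a $ c"
proof -
  have "w x y = 0" if "\<not> w x y > 0" using that weight_nonneg[of x y] by simp
  then show ?thesis by (auto simp: conn_laplacian_def)
qed

lemma conn_laplacian_sum:
  "(\<Sum>q\<in>U \<times> UNIV. conn_laplacian w \<sigma> (x, a) q * g q) =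
     (if x \<in> U then deg w x * g (x, a) else 0) - (\<Sum>y\<in>U. w x y * (\<Sum>c\<in>UNIV. \<sigma> x y $ a $ c * g (y, c)))"
proof -
  have "(\<Sum>c\<in>UNIV. conn_laplacian w \<sigma> (x, a) (y, c) * g (y, c)) =
      (if y = x then deg w x * g (x, a) else 0) - w x y * (\<Sum>c\<in>UNIV. \<sigma> x y $ a $ c * g (y, c))" for y
  proof -
    have "(\<Sum>c\<in>UNIV. conn_laplacian w \<sigma> (x, a) (y, c) * g (y, c)) =
        (\<Sum>c\<in>UNIV. (if y = x \<and> c = a then deg w x * g (y, c) else 0) - w x y * (\<sigma> x y $ a $ c * g (y, c)))"
      by (rule sum.cong) (auto simp: conn_laplacian_eq algebra_simps)
    then show ?thesis
      by (simp add: sum_subtractf sum_distrib_left)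
  qed
  moreover have "(\<Sum>q\<in>U \<times> UNIV. conn_laplacian w \<sigma> (x, a) q * g q) =
      (\<Sum>y\<in>U. \<Sum>c\<in>UNIV. conn_laplacian w \<sigma> (x, a) (y, c) * g (y, c))"
    by (simp add: sum.cartesian_product)
  ultimately show ?thesis
    by (simp add: sum_subtractf)
qed

end

context connection_network
begin

lemma connection_harmonic_vanishing:
  fixes z :: "'n \<Rightarrow> real^'d"
  assumes "U \<noteq> UNIV" and "\<And>r. r \<notin> U \<Longrightarrow> z r = 0"
    and harmonic: "\<And>r. r \<in> U \<Longrightarrow> deg w r *\<^sub>R z r = (\<Sum>y\<in>UNIV. w r y *\<^sub>R (\<sigma> r y *v z y))"
  shows "z x = 0"
proof -
  have "norm (z x) \<le> 0"
  proof (rule subharmonic_nonpos[OF assms(1)])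
    fix r assume "r \<in> U"
    have "deg w r * norm (z r) = norm (deg w r *\<^sub>R z r)"
      by (simp add: deg_nonneg)
    also have "\<dots> \<le> (\<Sum>y\<in>UNIV. norm (w r y *\<^sub>R (\<sigma> r y *v z y)))"
      unfolding harmonic[OF \<open>r \<in> U\<close>] by (rule norm_sum)
    also have "\<dots> = (\<Sum>y\<in>UNIV. w r y * norm (z y))"
    proof (rule sum.cong)
      fix y
      show "norm (w r y *\<^sub>R (\<sigma> r y *v z y)) = w r y * norm (z y)"
        using weight_nonneg[of r y] norm_orthogonal_matrix_mult[OF orthogonal_sigma, of r y]
        by (cases "w r y > 0") auto
    qed simp
    finally show "deg w r * norm (z r) \<le> (\<Sum>y\<in>UNIV. w r y * norm (z y))" .
  qed (use assms(2) in simp)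
  then show ?thesis by simp
qed

lemma conn_laplacian_injective_on:
  assumes "U \<noteq> UNIV"
    and "\<forall>p\<in>U \<times> UNIV. (\<Sum>q\<in>U \<times> UNIV. conn_laplacian w \<sigma> p q * g q) = 0"
    and "p \<in> U \<times> UNIV"
  shows "g p = 0"
proof -
  define z where "z r = (if r \<in> U then (\<chi> a. g (r, a)) else 0)" for r
  have "z r = 0" for r
  proof (rule connection_harmonic_vanishing[OF assms(1)])
    fix r assume "r \<in> U"
    have "(\<Sum>y\<in>UNIV. w r y *\<^sub>R (\<sigma> r y *v z y)) = (\<Sum>y\<in>U. w r y *\<^sub>R (\<sigma> r y *v z y))"
      by (rule sum.mono_neutral_right) (auto simp: z_def)
    moreover have "deg w r * g (r, a) = (\<Sum>y\<in>U. w r y * (\<Sum>c\<in>UNIV. \<sigma> r y $ a $ c * g (y, c)))" for a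
      using assms(2) \<open>r \<in> U\<close> by (simp add: conn_laplacian_sum)
    ultimately show "deg w r *\<^sub>R z r = (\<Sum>y\<in>UNIV. w r y *\<^sub>R (\<sigma> r y *v z y))"
      using \<open>r \<in> U\<close> by (simp add: vec_eq_iff z_def matrix_vector_mult_def sum_component)
  qed (simp add: z_def)
  moreover obtain r a where "p = (r, a)" "r \<in> U"
    using assms(3) by auto
  ultimately show ?thesis
    by (metis z_def vec_lambda_beta zero_index)
qed

lemma deg_hit_holonomy_entry:
  "deg w x * hit_holonomy w \<sigma> x b k $ e $ c =
     w x b * \<sigma> x b $ e $ c
     + (\<Sum>y\<in>- {b, k}. w x y * (\<Sum>c'\<in>UNIV. \<sigma> x y $ e $ c' * hit_holonomy w \<sigma> y b k $ c' $ c))"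
  using arg_cong[OF deg_scaleR_hit_holonomy[of x b k], of "\<lambda>M. M $ e $ c"]
  by (simp add: sum_component matrix_matrix_mult_def)

end

locale two_terminal_connection =
  two_terminal_network w i j + connection_network w \<sigma>
  for w :: "'n::finite \<Rightarrow> 'n \<Rightarrow> real" and i j :: 'n and \<sigma> :: "'n \<Rightarrow> 'n \<Rightarrow> real^'d::finite^'d"
begin

lemma conductance_column:
  "conductance w \<sigma> i j p (i, b) = conn_laplacian w \<sigma> p (i, b)
     + (\<Sum>q\<in>(- {i, j}) \<times> UNIV. conn_laplacian w \<sigma> p q * hit_holonomy w \<sigma> (fst q) i j $ snd q $ b)"
proof -
  have T: "- ({i, j} \<times> UNIV) = (- {i, j}) \<times> (UNIV :: 'd set)" by auto
  have "- {i, j} \<noteq> UNIV" by auto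
  have "conductance w \<sigma> i j p (i, b) = conn_laplacian w \<sigma> p (i, b)
     + (\<Sum>q\<in>- ({i, j} \<times> UNIV). conn_laplacian w \<sigma> p q * hit_holonomy w \<sigma> (fst q) i j $ snd q $ b)"
    unfolding conductance_def
  proof (rule schur_eq_harmonic_extension)
    fix r s :: "'n \<times> 'd" assume "r \<in> - ({i, j} \<times> UNIV)" "s \<in> - ({i, j} \<times> UNIV)"
    then show "mmul (- ({i, j} \<times> UNIV)) (pinv (- ({i, j} \<times> UNIV)) (conn_laplacian w \<sigma>)) (conn_laplacian w \<sigma>) r s =
        (if r = s then 1 else 0)"
      unfolding T using conn_laplacian_injective_on[OF \<open>- {i, j} \<noteq> UNIV\<close>]
      by (intro pinv_left_inverse) blast+
  next
    fix s :: "'n \<times> 'd" assume "s \<in> - ({i, j} \<times> UNIV)"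
    then show "(\<Sum>u\<in>- ({i, j} \<times> UNIV). conn_laplacian w \<sigma> s u * hit_holonomy w \<sigma> (fst u) i j $ snd u $ b) =
        - conn_laplacian w \<sigma> s (i, b)"
      unfolding T using deg_hit_holonomy_entry[of "fst s" i j "snd s" b]
      by (cases s) (simp add: conn_laplacian_sum conn_laplacian_eq)
  qed
  then show ?thesis by (simp only: T)
qed

lemma conductance_block_diag: "blk (conductance w \<sigma> i j) i i = deg w i *\<^sub>R (mat 1 - hit_holonomy w \<sigma> i i j)"
  using deg_hit_holonomy_entry[of i i j]
  by (simp add: blk_def vec_eq_iff mat_def conductance_column conn_laplacian_sum conn_laplacian_eq
      right_diff_distrib)

lemma conductance_block_offdiag: "blk (conductance w \<sigma> i j) j i = - deg w j *\<^sub>R hit_holonomy w \<sigma> j i j"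
  using deg_hit_holonomy_entry[of j i j] terminals_distinct
  by (simp add: blk_def vec_eq_iff conductance_column conn_laplacian_sum conn_laplacian_eq)

lemma conductance_block_diag_Omega1:
  "blk (conductance w \<sigma> i j) i i = deg w i *\<^sub>R (mat 1 - (1 - hitprob w i j i) *\<^sub>R Omega1 w \<sigma> i i j)"
proof -
  have "hitprob w i i j = 1 - hitprob w i j i"
    using hitprob_complement[of i] by simp
  then show ?thesis
    using hitprob_scaleR_Omega1[of i i j] by (simp add: conductance_block_diag)
qed

lemma conductance_block_offdiag_Omega1:
  "blk (conductance w \<sigma> i j) j i = - (deg w j * hitprob w j i j) *\<^sub>R Omega1 w \<sigma> j i j"
  using hitprob_scaleR_Omega1[of j i j] by (simp add: conductance_block_offdiag flip: scaleR_scaleR)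

end

theorem theorem5p9:
  fixes w :: "'n::finite \<Rightarrow> 'n \<Rightarrow> real"
    and \<sigma> :: "'n \<Rightarrow> 'n \<Rightarrow> real^'d::finite^'d"
    and i j :: 'n
  assumes "weighted_graph w" and "connection w \<sigma>" and "i \<noteq> j"
  defines "C \<equiv> conductance w \<sigma> i j"
    and "c \<equiv> eff_conductance w i j"
  shows "blk C i i = deg w i *\<^sub>R (mat 1 - (1 - hitprob w i j i) *\<^sub>R Omega1 w \<sigma> i i j)
    \<and> blk C j i = - (deg w j * hitprob w j i j) *\<^sub>R Omega1 w \<sigma> j i j
    \<and> c = deg w i * hitprob w i j i \<and> c = deg w j * hitprob w j i j
    \<and> blk C i i = c *\<^sub>R mat 1 + (deg w i - c) *\<^sub>R (mat 1 - Omega1 w \<sigma> i i j)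
    \<and> blk C i j = - c *\<^sub>R mat 1 + c *\<^sub>R (mat 1 - Omega1 w \<sigma> i j i)
    \<and> blk C j i = - c *\<^sub>R mat 1 + c *\<^sub>R (mat 1 - Omega1 w \<sigma> j i j)
    \<and> blk C j j = c *\<^sub>R mat 1 + (deg w j - c) *\<^sub>R (mat 1 - Omega1 w \<sigma> j j i)"
proof -
  interpret ij: two_terminal_connection w i j \<sigma>
    using assms by unfold_locales
  interpret ji: two_terminal_connection w j i \<sigma>
    using assms by unfold_locales auto
  have swap: "conductance w \<sigma> j i = conductance w \<sigma> i j"
    by (simp add: conductance_def insert_commute)
  have c_i: "c = deg w i * hitprob w i j i" and c_j: "c = deg w j * hitprob w j i j"
    using ij.eff_conductance_eq ij.deg_hitprob_symmetric by (simp_all add: c_def)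
  have "blk C i i = deg w i *\<^sub>R (mat 1 - (1 - hitprob w i j i) *\<^sub>R Omega1 w \<sigma> i i j)"
    and "blk C j i = - (deg w j * hitprob w j i j) *\<^sub>R Omega1 w \<sigma> j i j"
    and "blk C j j = deg w j *\<^sub>R (mat 1 - (1 - hitprob w j i j) *\<^sub>R Omega1 w \<sigma> j j i)"
    and "blk C i j = - (deg w i * hitprob w i j i) *\<^sub>R Omega1 w \<sigma> i j i"
    using ij.conductance_block_diag_Omega1 ij.conductance_block_offdiag_Omega1
      ji.conductance_block_diag_Omega1 ji.conductance_block_offdiag_Omega1
    by (simp_all add: C_def swap)
  with c_i c_j show ?thesis
    by (simp add: algebra_simps)
qed

end
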